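(* Let $0<\alpha<1$, $T>0$, $N\ge1$, and let $\beta_0,\beta_1,\dots,\beta_N>0$ and $\tau_1,\dots,\tau_N>0$. Let $f:[0,T]\to\mathbb{R}$ with $f\in W^{3,\infty}(0,T)$. Divide $[0,T]$ into $N_T$ equal steps of size $\Delta_t=T/N_T$ with $t_n=n\Delta_t$ and $f^n=f(t_n)$. Define the Caputo derivative $$D_t^\alpha f=\frac{1}{\Gamma(1-\alpha)}\int_0^t\frac{f'(s)}{(t-s)^\alpha}\,ds,$$ for $k=1,\dots,N$ let $q_k(t)=\int_0^t\beta_k\exp[(s-t)/\tau_k]f'(s)\,ds$, define $q_k^0=q_k(0)$ and $q_k^n=e_k^2q_k^{n-1}+e_k\beta_k(f^n-f^{n-1})$ for $n\ge1$ with $e_k=\exp[-\Delta_t/(2\tau_k)]$, and set $$\hat{\mathrm D}_n^\alpha f=\frac{\beta_0}{\Delta_t}(f^n-f^{n-1})+\sum_{k=1}^N q_k^n.$$ Let $$\varepsilon(z)=\frac{z^{1-\alpha}}{\Gamma(2-\alpha)}-\beta_0+\sum_{k=1}^N\beta_k\tau_k\big(\exp(-z/\tau_k)-1\big),\qquad z\in[0,T].$$ Then for any $t_n\in\{t_1,\dots,t_{N_T}\}$ $$\big|\hat{\mathrm D}_n^\alpha f-D_{t_n}^\alpha f\big|\le\|\varepsilon\|_{L^\infty(0,T)}\Big[|f'(0)|+\|f''\|_{L^1(0,T)}\Big]+\Delta_t\big(\beta_0/2+C(\boldsymbol\beta,\boldsymbol\tau)\Delta_t\big)\|f\|_{W^{3,\infty}(0,T)},$$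 where $C(\boldsymbol\beta,\boldsymbol\tau)>0$ is a constant depending on the chosen $\beta_k,\tau_k$, $k=1,\dots,N$.
   Context: $\Gamma$ is the Gamma function. $W^{3,\infty}(0,T)$ is the Sobolev space of functions whose derivatives up to order $3$ are essentially bounded, with norm $\|f\|_{W^{3,\infty}(0,T)}$ controlling the $L^\infty$ norms of $f,f',f'',f'''$; $\|\cdot\|_{L^\infty(0,T)}$, $\|\cdot\|_{L^1(0,T)}$ are the usual norms. $\boldsymbol\beta=(\beta_1,\dots,\beta_N)$, $\boldsymbol\tau=(\tau_1,\dots,\tau_N)$. *)

theory Defs
  imports "HOL-Analysis.Analysis"
begin

text \<open>Sup norm on [0,T] (for continuous functions this is the L-infinity norm;
  for the third derivative, quantifying over all representatives makes it the essential sup).\<close>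
definition Linf_norm :: "real \<Rightarrow> (real \<Rightarrow> real) \<Rightarrow> real" where
  "Linf_norm T g = (SUP x\<in>{0..T}. \<bar>g x\<bar>)"

definition L1_norm :: "real \<Rightarrow> (real \<Rightarrow> real) \<Rightarrow> real" where
  "L1_norm T g = integral {0..T} (\<lambda>s. \<bar>g s\<bar>)"

definition W3inf_norm :: "real \<Rightarrow> (real \<Rightarrow> real) \<Rightarrow> (real \<Rightarrow> real) \<Rightarrow> (real \<Rightarrow> real) \<Rightarrow> (real \<Rightarrow> real) \<Rightarrow> real" where
  "W3inf_norm T f f1 f2 f3 =
     max (max (Linf_norm T f) (Linf_norm T f1)) (max (Linf_norm T f2) (Linf_norm T f3))"

definition caputo :: "real \<Rightarrow> (real \<Rightarrow> real) \<Rightarrow> real \<Rightarrow> real" where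
  "caputo \<alpha> f1 t = 1 / Gamma (1 - \<alpha>) * integral {0..t} (\<lambda>s. f1 s / (t - s) powr \<alpha>)"

definition qexact :: "real \<Rightarrow> real \<Rightarrow> (real \<Rightarrow> real) \<Rightarrow> real \<Rightarrow> real" where
  "qexact \<beta>k \<tau>k f1 t = integral {0..t} (\<lambda>s. \<beta>k * exp ((s - t) / \<tau>k) * f1 s)"

primrec qdisc :: "real \<Rightarrow> real \<Rightarrow> real \<Rightarrow> (real \<Rightarrow> real) \<Rightarrow> real \<Rightarrow> nat \<Rightarrow> real" where
  "qdisc \<beta>k \<tau>k dt f q0 0 = q0"
| "qdisc \<beta>k \<tau>k dt f q0 (Suc n) =
     (exp (- dt / (2 * \<tau>k)))\<^sup>2 * qdisc \<beta>k \<tau>k dt f q0 n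
     + exp (- dt / (2 * \<tau>k)) * \<beta>k * (f (real (Suc n) * dt) - f (real n * dt))"

definition Dhat :: "nat \<Rightarrow> (nat \<Rightarrow> real) \<Rightarrow> (nat \<Rightarrow> real) \<Rightarrow> real \<Rightarrow> (real \<Rightarrow> real) \<Rightarrow> (real \<Rightarrow> real) \<Rightarrow> nat \<Rightarrow> real" where
  "Dhat N \<beta> \<tau> dt f f1 n =
     \<beta> 0 / dt * (f (real n * dt) - f (real (n - 1) * dt))
     + (\<Sum>k=1..N. qdisc (\<beta> k) (\<tau> k) dt f (qexact (\<beta> k) (\<tau> k) f1 0) n)"

definition eps :: "real \<Rightarrow> nat \<Rightarrow> (nat \<Rightarrow> real) \<Rightarrow> (nat \<Rightarrow> real) \<Rightarrow> real \<Rightarrow> real" where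
  "eps \<alpha> N \<beta> \<tau> z = z powr (1 - \<alpha>) / Gamma (2 - \<alpha>) - \<beta> 0
     + (\<Sum>k=1..N. \<beta> k * \<tau> k * (exp (- z / \<tau> k) - 1))"

end

theory Submission
  imports Defs
begin

(* The three error sources are estimated separately.
   Integrating by parts, beta_0 f'(t) + sum_k q_k(t) and the Caputo derivative both take the form
   f'(0) Phi(t) + int_0^t f''(s) Phi(t - s) ds, where Phi is the primitive of the respective kernel;
   the two primitives differ by eps, which gives the first term of the bound.
   The backward difference quotient differs from f'(t_n) by at most dt/2 max |f''|.
   Exactly, q_k(t + dt) = e_k^2 q_k(t) + beta_k int_t^{t+dt} exp ((s - t - dt) / tau_k) f'(s) ds, and the
   scheme replaces the kernel by its value e_k at the midpoint: the local error is O(dt^3), and O(dt)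
   for every dt.  Damped by e_k^2 < 1, local errors accumulate to at most 1 / (1 - e_k^2) <= 1 + tau_k / dt
   times one of them; the better of the two local bounds makes this O(dt^2) uniformly in dt.
   Only the sup norms of f' and f'' enter, and both are dominated by the W^{3,inf} norm. *)

lemma abs_le_Linf_norm:
  assumes "continuous_on {0..T} g" and "x \<in> {0..T}"
  shows "\<bar>g x\<bar> \<le> Linf_norm T g"
proof -
  have "bounded ((\<lambda>x. \<bar>g x\<bar>) ` {0..T})"
    by (intro compact_imp_bounded compact_continuous_image continuous_intros assms) simp
  then show ?thesis
    unfolding Linf_norm_def using assms(2) by (intro cSUP_upper bounded_imp_bdd_above) auto
qed

lemma abs_increment_le_majorant_increment:
  fixes g G :: "real \<Rightarrow> real"
  assumes "a \<le> b"
    and g: "\<And>x. x \<in> {a..b} \<Longrightarrow> (g has_real_derivative g' x) (at x within {a..b})"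
    and G: "\<And>x. x \<in> {a..b} \<Longrightarrow> (G has_real_derivative G' x) (at x within {a..b})"
    and le: "\<And>x. x \<in> {a..b} \<Longrightarrow> \<bar>g' x\<bar> \<le> G' x"
  shows "\<bar>g b - g a\<bar> \<le> G b - G a"
proof -
  have "(G b + \<sigma> * g b) - (G a + \<sigma> * g a) \<ge> 0" if "\<bar>\<sigma>\<bar> = 1" for \<sigma> :: real
  proof -
    have "((\<lambda>x. G x + \<sigma> * g x) has_derivative (\<lambda>h. (G' x + \<sigma> * g' x) * h)) (at x within {a..b})"
      if "a \<le> x" "x \<le> b" for x
      using G[of x] g[of x] that
      by (auto intro!: derivative_eq_intros simp: has_field_derivative_def algebra_simps)
    then have "\<exists>z\<in>{a..b}. (G b + \<sigma> * g b) - (G a + \<sigma> * g a) = (G' z + \<sigma> * g' z) * (b - a)"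
      by (rule mvt_very_simple[OF \<open>a \<le> b\<close>])
    moreover have "G' z + \<sigma> * g' z \<ge> 0" if "z \<in> {a..b}" for z
      using le[OF that] \<open>\<bar>\<sigma>\<bar> = 1\<close> by (auto simp: abs_if split: if_splits)
    ultimately show ?thesis using \<open>a \<le> b\<close> by (metis mult_nonneg_nonneg diff_ge_0_iff_ge)
  qed
  from this[of 1] this[of "-1"] show ?thesis by linarith
qed

lemma backward_difference_quotient_error_le:
  fixes f f1 f2 :: "real \<Rightarrow> real"
  assumes "a < b"
    and f: "\<And>x. x \<in> {a..b} \<Longrightarrow> (f has_real_derivative f1 x) (at x within {a..b})"
    and f1: "\<And>x. x \<in> {a..b} \<Longrightarrow> (f1 has_real_derivative f2 x) (at x within {a..b})"
    and M: "\<And>x. x \<in> {a..b} \<Longrightarrow> \<bar>f2 x\<bar> \<le> M"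
  shows "\<bar>(f b - f a) / (b - a) - f1 b\<bar> \<le> M * (b - a) / 2"
proof -
  have lip: "\<bar>f1 x - f1 b\<bar> \<le> M * (b - x)" if "x \<in> {a..b}" for x
    using field_differentiable_bound[of "{a..b}" f1 f2 M x b] f1 M that \<open>a < b\<close> by auto
  have "\<bar>(f b - b * f1 b) - (f a - a * f1 b)\<bar> \<le> - M * (b - b)\<^sup>2 / 2 - - M * (b - a)\<^sup>2 / 2"
  proof (rule abs_increment_le_majorant_increment[where g' = "\<lambda>x. f1 x - f1 b" and G' = "\<lambda>x. M * (b - x)"])
    show "((\<lambda>x. f x - x * f1 b) has_real_derivative f1 x - f1 b) (at x within {a..b})"
      if "x \<in> {a..b}" for x
      using that by (auto intro!: derivative_eq_intros f)
    show "((\<lambda>x. - M * (b - x)\<^sup>2 / 2) has_real_derivative M * (b - x)) (at x within {a..b})" for x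
      by (auto intro!: derivative_eq_intros simp: field_simps)
  qed (use \<open>a < b\<close> lip in auto)
  then have "\<bar>f b - f a - (b - a) * f1 b\<bar> \<le> M * (b - a)\<^sup>2 / 2"
    by (simp add: algebra_simps)
  moreover have "(f b - f a) / (b - a) - f1 b = (f b - f a - (b - a) * f1 b) / (b - a)"
    using \<open>a < b\<close> by (simp add: field_simps)
  ultimately show ?thesis
    using \<open>a < b\<close> by (simp add: abs_divide divide_le_eq power2_eq_square mult_ac)
qed

lemma exp_neg_mult_abs_exp_remainder_le:
  fixes d x :: real
  assumes "\<bar>d\<bar> \<le> x"
  shows "exp (- x) * \<bar>exp d - 1 - d\<bar> \<le> d\<^sup>2 / 2"
proof -
  obtain t where t: "\<bar>t\<bar> \<le> \<bar>d\<bar>" and "exp d = (\<Sum>m<2. d ^ m / fact m) + exp t / fact 2 * d ^ 2"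
    using Maclaurin_exp_le by blast
  then have "exp (- x) * \<bar>exp d - 1 - d\<bar> = (exp (- x) * exp t) * (d\<^sup>2 / 2)"
    by (simp add: numeral_2_eq_2)
  also have "\<dots> \<le> 1 * (d\<^sup>2 / 2)"
    using t assms by (intro mult_right_mono) (simp_all flip: exp_add)
  finally show ?thesis
    by simp
qed

lemma inverse_one_minus_exp_neg_le:
  fixes x :: real
  assumes "0 < x"
  shows "1 / (1 - exp (- x)) \<le> 1 + 1 / x"
proof -
  have "exp (- x) * (1 + x) \<le> exp (- x) * exp x"
    by (intro mult_left_mono exp_ge_add_one_self) simp
  then have "exp (- x) * (1 + x) \<le> 1"
    by (simp flip: exp_add)
  moreover have "exp (- x) < 1"
    using assms by simp
  ultimately show ?thesis
    using assms by (simp add: field_simps)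
qed

lemma abs_linear_recursion_le:
  fixes x :: "nat \<Rightarrow> real"
  assumes "x 0 = 0" and "0 \<le> E" and "E < 1" and "0 \<le> \<delta>"
    and step: "\<And>j. j < n \<Longrightarrow> \<bar>x (Suc j) - E * x j\<bar> \<le> \<delta>"
  shows "\<bar>x n\<bar> \<le> \<delta> / (1 - E)"
  using step
proof (induction n)
  case 0
  show ?case
    using assms by simp
next
  case (Suc n)
  have "\<bar>x (Suc n)\<bar> \<le> E * \<bar>x n\<bar> + \<delta>"
    using Suc.prems[of n] abs_triangle_ineq2[of "x (Suc n)" "E * x n"] \<open>0 \<le> E\<close>
    by (simp add: abs_mult)
  also have "\<dots> \<le> E * (\<delta> / (1 - E)) + \<delta>"
    using Suc \<open>0 \<le> E\<close> by (intro add_right_mono mult_left_mono) auto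
  also have "\<dots> = \<delta> / (1 - E)"
    using \<open>E < 1\<close> by (simp add: field_simps)
  finally show ?case .
qed

lemma has_integral_centered_linear:
  fixes a b c :: real
  assumes "a \<le> b"
  shows "((\<lambda>s. c * (s - (a + b) / 2)) has_integral 0) {a..b}"
proof -
  have "((\<lambda>s. c * (s - (a + b) / 2)) has_integral
         c * (b - (a + b) / 2)\<^sup>2 / 2 - c * (a - (a + b) / 2)\<^sup>2 / 2) {a..b}"
    by (intro fundamental_theorem_of_calculus assms)
      (auto intro!: derivative_eq_intros simp flip: has_real_derivative_iff_has_vector_derivative)
  then show ?thesis
    by (simp add: power2_eq_square field_simps)
qed

lemma abs_integral_exp_kernel_midpoint_le:
  fixes f1 f2 :: "real \<Rightarrow> real"
  assumes "a \<le> b" and "0 < \<tau>"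
    and f1: "\<And>x. x \<in> {a..b} \<Longrightarrow> (f1 has_real_derivative f2 x) (at x within {a..b})"
    and M1: "\<And>x. x \<in> {a..b} \<Longrightarrow> \<bar>f1 x\<bar> \<le> M1"
    and M2: "\<And>x. x \<in> {a..b} \<Longrightarrow> \<bar>f2 x\<bar> \<le> M2"
  shows "\<bar>integral {a..b} (\<lambda>s. (exp ((s - b) / \<tau>) - exp (- (b - a) / (2 * \<tau>))) * f1 s)\<bar>
           \<le> (b - a) ^ 3 * (M1 / (8 * \<tau>\<^sup>2) + M2 / (4 * \<tau>))"
proof -
  define h m e where "h = b - a" and "m = (a + b) / 2" and "e = exp (- (b - a) / (2 * \<tau>))"
  (* Subtracting c (s - m), whose integral vanishes, leaves only the quadratic remainder of the kernel
     about the midpoint m and the variation f1 s - f1 m = O(h). *)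
  define c where "c = e / \<tau> * f1 m"
  have "0 \<le> h" "0 < e" "e \<le> 1"
    using assms by (simp_all add: h_def e_def divide_nonpos_pos)
  have cont: "continuous_on {a..b} f1"
    using f1 by (rule DERIV_continuous_on)
  have "m \<in> {a..b}"
    using \<open>a \<le> b\<close> by (simp add: m_def)
  have pointwise: "\<bar>(exp ((s - b) / \<tau>) - e) * f1 s - c * (s - m)\<bar> \<le> h\<^sup>2 * (M1 / (8 * \<tau>\<^sup>2) + M2 / (4 * \<tau>))"
    if s: "s \<in> {a..b}" for s
  proof -
    define d where "d = (s - m) / \<tau>"
    have sm: "\<bar>s - m\<bar> \<le> h / 2"
      using s by (auto simp: h_def m_def abs_le_iff field_simps)
    have "exp ((s - b) / \<tau>) = e * exp d"
      using \<open>0 < \<tau>\<close> by (simp add: e_def d_def m_def field_simps flip: exp_add)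
    then have split: "(exp ((s - b) / \<tau>) - e) * f1 s - c * (s - m)
        = e * (exp d - 1 - d) * f1 s + e / \<tau> * (s - m) * (f1 s - f1 m)"
      using \<open>0 < \<tau>\<close> by (simp add: c_def d_def field_simps)
    have d: "\<bar>d\<bar> \<le> h / (2 * \<tau>)"
      using sm \<open>0 < \<tau>\<close> by (simp add: d_def abs_divide field_simps)
    have "exp (- (h / (2 * \<tau>))) = e"
      using \<open>0 < \<tau>\<close> by (simp add: e_def h_def field_simps)
    then have "e * \<bar>exp d - 1 - d\<bar> \<le> d\<^sup>2 / 2"
      using exp_neg_mult_abs_exp_remainder_le[OF d] by simp
    also have "\<dots> \<le> (h / (2 * \<tau>))\<^sup>2 / 2"
      using power_mono[OF d abs_ge_zero, of 2] by simp
    finally have "e * \<bar>exp d - 1 - d\<bar> * \<bar>f1 s\<bar> \<le> (h / (2 * \<tau>))\<^sup>2 / 2 * M1"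
      using M1[OF s] by (intro mult_mono) auto
    then have quadratic: "\<bar>e * (exp d - 1 - d) * f1 s\<bar> \<le> h\<^sup>2 * (M1 / (8 * \<tau>\<^sup>2))"
      using \<open>0 < e\<close> by (simp add: abs_mult power_divide)
    have "\<bar>f1 s - f1 m\<bar> \<le> M2 * \<bar>s - m\<bar>"
      using field_differentiable_bound[of "{a..b}" f1 f2 M2 s m] f1 M2 s \<open>m \<in> {a..b}\<close> by auto
    also have "\<dots> \<le> M2 * (h / 2)"
      using sm M2[OF s] by (intro mult_left_mono) auto
    finally have "e * \<bar>s - m\<bar> * \<bar>f1 s - f1 m\<bar> \<le> 1 * (h / 2) * (M2 * (h / 2))"
      using sm \<open>0 \<le> h\<close> \<open>0 < e\<close> \<open>e \<le> 1\<close> by (intro mult_mono) auto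
    then have "e * \<bar>s - m\<bar> * \<bar>f1 s - f1 m\<bar> / \<tau> \<le> 1 * (h / 2) * (M2 * (h / 2)) / \<tau>"
      using \<open>0 < \<tau>\<close> by (intro divide_right_mono) auto
    then have linear: "\<bar>e / \<tau> * (s - m) * (f1 s - f1 m)\<bar> \<le> h\<^sup>2 * (M2 / (4 * \<tau>))"
      using \<open>0 < e\<close> \<open>0 < \<tau>\<close> by (simp add: abs_mult power2_eq_square mult_ac)
    show ?thesis
      unfolding split distrib_left
      using abs_triangle_ineq[of "e * (exp d - 1 - d) * f1 s"] quadratic linear by linarith
  qed
  have lin: "((\<lambda>s. c * (s - m)) has_integral 0) {a..b}"
    unfolding m_def by (rule has_integral_centered_linear[OF \<open>a \<le> b\<close>])
  have "(\<lambda>s. (exp ((s - b) / \<tau>) - e) * f1 s) integrable_on {a..b}"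
    using \<open>0 < \<tau>\<close> by (intro integrable_continuous_real continuous_intros cont) auto
  from integral_diff[OF this has_integral_integrable[OF lin]]
  have "integral {a..b} (\<lambda>s. (exp ((s - b) / \<tau>) - e) * f1 s)
      = integral {a..b} (\<lambda>s. (exp ((s - b) / \<tau>) - e) * f1 s - c * (s - m))"
    by (simp only: integral_unique[OF lin] diff_zero)
  also have "\<bar>\<dots>\<bar> \<le> h\<^sup>2 * (M1 / (8 * \<tau>\<^sup>2) + M2 / (4 * \<tau>)) * (b - a)"
  proof -
    have "continuous_on {a..b} (\<lambda>s. (exp ((s - b) / \<tau>) - e) * f1 s - c * (s - m))"
      using \<open>0 < \<tau>\<close> by (intro continuous_intros cont) auto
    from integral_bound[OF \<open>a \<le> b\<close> this] pointwise show ?thesis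
      by simp
  qed
  finally show ?thesis
    by (simp add: h_def e_def power2_eq_square power3_eq_cube mult_ac)
qed

lemma abs_integral_exp_kernel_le:
  fixes f1 :: "real \<Rightarrow> real"
  assumes "a \<le> b" and "0 < \<tau>" and cont: "continuous_on {a..b} f1"
    and M1: "\<And>x. x \<in> {a..b} \<Longrightarrow> \<bar>f1 x\<bar> \<le> M1"
  shows "\<bar>integral {a..b} (\<lambda>s. (exp ((s - b) / \<tau>) - exp (- (b - a) / (2 * \<tau>))) * f1 s)\<bar>
           \<le> (b - a) * M1"
proof -
  have bound: "\<bar>(exp ((s - b) / \<tau>) - exp (- (b - a) / (2 * \<tau>))) * f1 s\<bar> \<le> 1 * M1"
    if s: "s \<in> {a..b}" for s
  proof -
    have "exp ((s - b) / \<tau>) \<le> 1" "exp (- (b - a) / (2 * \<tau>)) \<le> 1"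
      using s assms by (simp_all add: divide_nonpos_pos)
    then have "\<bar>exp ((s - b) / \<tau>) - exp (- (b - a) / (2 * \<tau>))\<bar> \<le> 1"
      unfolding abs_le_iff using exp_gt_zero[of "(s - b) / \<tau>"] exp_gt_zero[of "- (b - a) / (2 * \<tau>)"]
      by linarith
    then show ?thesis
      using M1[OF s] unfolding abs_mult by (intro mult_mono) auto
  qed
  have "continuous_on {a..b} (\<lambda>s. (exp ((s - b) / \<tau>) - exp (- (b - a) / (2 * \<tau>))) * f1 s)"
    using \<open>0 < \<tau>\<close> by (intro continuous_intros cont) auto
  from integral_bound[OF \<open>a \<le> b\<close> this] bound show ?thesis
    by (simp add: mult.commute)
qed

lemma exp_kernel_step_error_le:
  fixes f f1 f2 :: "real \<Rightarrow> real"
  assumes "a \<le> b" and "0 < \<tau>"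
    and f: "\<And>x. x \<in> {a..b} \<Longrightarrow> (f has_real_derivative f1 x) (at x within {a..b})"
    and f1: "\<And>x. x \<in> {a..b} \<Longrightarrow> (f1 has_real_derivative f2 x) (at x within {a..b})"
    and M1: "\<And>x. x \<in> {a..b} \<Longrightarrow> \<bar>f1 x\<bar> \<le> M"
    and M2: "\<And>x. x \<in> {a..b} \<Longrightarrow> \<bar>f2 x\<bar> \<le> M"
  shows "\<bar>integral {a..b} (\<lambda>s. exp ((s - b) / \<tau>) * f1 s) - exp (- (b - a) / (2 * \<tau>)) * (f b - f a)\<bar>
           \<le> min ((b - a) ^ 3 * (M / (8 * \<tau>\<^sup>2) + M / (4 * \<tau>))) ((b - a) * M)"
proof -
  define e where "e = exp (- (b - a) / (2 * \<tau>))"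
  have cont: "continuous_on {a..b} f1"
    using f1 by (rule DERIV_continuous_on)
  have "(f1 has_integral f b - f a) {a..b}"
    using \<open>a \<le> b\<close> f by (intro fundamental_theorem_of_calculus)
      (auto simp flip: has_real_derivative_iff_has_vector_derivative)
  then have "(f b - f a) = integral {a..b} f1"
    by (simp add: integral_unique)
  then have "integral {a..b} (\<lambda>s. exp ((s - b) / \<tau>) * f1 s) - e * (f b - f a)
      = integral {a..b} (\<lambda>s. (exp ((s - b) / \<tau>) - e) * f1 s)"
    using \<open>0 < \<tau>\<close>
    by (simp add: left_diff_distrib integral_diff integrable_continuous_real continuous_intros cont)
  then show ?thesis
    using abs_integral_exp_kernel_midpoint_le[OF \<open>a \<le> b\<close> \<open>0 < \<tau>\<close> f1 M1 M2]
      abs_integral_exp_kernel_le[OF \<open>a \<le> b\<close> \<open>0 < \<tau>\<close> cont M1]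
    by (simp add: e_def)
qed

lemma accumulated_step_error_le:
  fixes h \<tau> M :: real
  assumes "0 < h" and "0 < \<tau>" and "0 \<le> M"
  shows "min (h ^ 3 * (M / (8 * \<tau>\<^sup>2) + M / (4 * \<tau>))) (h * M) * (1 + \<tau> / h)
           \<le> 2 * (1 / \<tau> + 1) * h\<^sup>2 * M"
proof (cases "h \<le> \<tau>")
  case True
  have "min (h ^ 3 * (M / (8 * \<tau>\<^sup>2) + M / (4 * \<tau>))) (h * M) * (1 + \<tau> / h)
      \<le> h ^ 3 * (M / (8 * \<tau>\<^sup>2) + M / (4 * \<tau>)) * (1 + \<tau> / h)"
    using assms by (intro mult_right_mono) auto
  also have "\<dots> = h\<^sup>2 * (h + \<tau>) * (M / (8 * \<tau>\<^sup>2) + M / (4 * \<tau>))"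
    using assms by (simp add: field_simps power2_eq_square power3_eq_cube)
  also have "\<dots> \<le> h\<^sup>2 * (2 * \<tau>) * (M / (8 * \<tau>\<^sup>2) + M / (4 * \<tau>))"
    using True assms by (intro mult_right_mono mult_left_mono) auto
  also have "\<dots> = (1 / (4 * \<tau>) + 1 / 2) * h\<^sup>2 * M"
    using assms by (simp add: field_simps power2_eq_square)
  also have "\<dots> \<le> 2 * (1 / \<tau> + 1) * h\<^sup>2 * M"
    using assms by (intro mult_right_mono) (auto simp: field_simps)
  finally show ?thesis .
next
  case False
  have "min (h ^ 3 * (M / (8 * \<tau>\<^sup>2) + M / (4 * \<tau>))) (h * M) * (1 + \<tau> / h) \<le> h * M * (1 + \<tau> / h)"
    using assms by (intro mult_right_mono) auto
  also have "\<dots> = (h + \<tau>) * M"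
    using assms by (simp add: field_simps)
  also have "\<dots> \<le> (2 * h) * M"
    using False assms by (intro mult_right_mono) auto
  also have "\<dots> \<le> (2 * h * (h / \<tau>)) * M"
    using False assms by (intro mult_right_mono mult_le_cancel_left1[THEN iffD2]) auto
  also have "\<dots> \<le> 2 * (1 / \<tau> + 1) * h\<^sup>2 * M"
    using assms by (intro mult_right_mono) (auto simp: field_simps power2_eq_square)
  finally show ?thesis .
qed

lemma qexact_step:
  fixes f1 :: "real \<Rightarrow> real"
  assumes "0 \<le> a" and "a \<le> b" and "0 < \<tau>" and cont: "continuous_on {0..b} f1"
  shows "qexact \<beta> \<tau> f1 b
           = exp (- (b - a) / \<tau>) * qexact \<beta> \<tau> f1 a + \<beta> * integral {a..b} (\<lambda>s. exp ((s - b) / \<tau>) * f1 s)"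
proof -
  have "(\<lambda>s. \<beta> * exp ((s - b) / \<tau>) * f1 s) integrable_on {0..b}"
    using \<open>0 < \<tau>\<close> by (intro integrable_continuous_real continuous_intros cont) auto
  from Henstock_Kurzweil_Integration.integral_combine[OF \<open>0 \<le> a\<close> \<open>a \<le> b\<close> this]
  have "qexact \<beta> \<tau> f1 b = integral {0..a} (\<lambda>s. \<beta> * exp ((s - b) / \<tau>) * f1 s)
        + integral {a..b} (\<lambda>s. \<beta> * exp ((s - b) / \<tau>) * f1 s)"
    unfolding qexact_def by simp
  also have "integral {0..a} (\<lambda>s. \<beta> * exp ((s - b) / \<tau>) * f1 s) = exp (- (b - a) / \<tau>) * qexact \<beta> \<tau> f1 a"
    unfolding qexact_def integral_mult_right[symmetric]
    by (rule integral_cong) (use \<open>0 < \<tau>\<close> in \<open>simp add: field_simps flip: exp_add\<close>)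
  finally show ?thesis
    by (simp add: mult.assoc)
qed

lemma qdisc_error_le:
  fixes f f1 f2 :: "real \<Rightarrow> real"
  assumes f: "\<And>x. x \<in> {0..T} \<Longrightarrow> (f has_real_derivative f1 x) (at x within {0..T})"
    and f1: "\<And>x. x \<in> {0..T} \<Longrightarrow> (f1 has_real_derivative f2 x) (at x within {0..T})"
    and M1: "\<And>x. x \<in> {0..T} \<Longrightarrow> \<bar>f1 x\<bar> \<le> M"
    and M2: "\<And>x. x \<in> {0..T} \<Longrightarrow> \<bar>f2 x\<bar> \<le> M"
    and "0 < \<tau>" and "0 \<le> \<beta>" and "0 < dt" and "real n * dt \<le> T"
  shows "\<bar>qdisc \<beta> \<tau> dt f (qexact \<beta> \<tau> f1 0) n - qexact \<beta> \<tau> f1 (real n * dt)\<bar>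
           \<le> 2 * \<beta> * (1 / \<tau> + 1) * dt\<^sup>2 * M"
proof -
  define x where "x j = qdisc \<beta> \<tau> dt f (qexact \<beta> \<tau> f1 0) j - qexact \<beta> \<tau> f1 (real j * dt)" for j
  define E where "E = exp (- dt / \<tau>)"
  define \<delta> where "\<delta> = \<beta> * min (dt ^ 3 * (M / (8 * \<tau>\<^sup>2) + M / (4 * \<tau>))) (dt * M)"
  have "0 \<le> T"
    using \<open>real n * dt \<le> T\<close> \<open>0 < dt\<close> by (meson mult_nonneg_nonneg of_nat_0_le_iff order_trans less_imp_le)
  then have "0 \<le> M"
    using M1[of 0] by auto
  have "0 \<le> \<delta>"
    using \<open>0 \<le> \<beta>\<close> \<open>0 \<le> M\<close> \<open>0 < \<tau>\<close> \<open>0 < dt\<close> by (simp add: \<delta>_def)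
  have "E < 1"
    using \<open>0 < dt\<close> \<open>0 < \<tau>\<close> by (simp add: E_def)
  have step: "\<bar>x (Suc j) - E * x j\<bar> \<le> \<delta>" if "j < n" for j
  proof -
    define a b where "a = real j * dt" and "b = real (Suc j) * dt"
    have "b - a = dt" "0 \<le> a"
      using \<open>0 < dt\<close> by (simp_all add: a_def b_def algebra_simps)
    have "real (Suc j) * dt \<le> real n * dt"
      using that \<open>0 < dt\<close> by (intro mult_right_mono) auto
    then have "{a..b} \<subseteq> {0..T}" "b \<le> T"
      using \<open>0 \<le> a\<close> \<open>real n * dt \<le> T\<close> by (auto simp: b_def)
    have "continuous_on {0..b} f1"
      using continuous_on_subset[OF DERIV_continuous_on[OF f1]] \<open>b \<le> T\<close> by auto
    note q = qexact_step[OF \<open>0 \<le> a\<close> _ \<open>0 < \<tau>\<close> this]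
    have "(exp (- dt / (2 * \<tau>)))\<^sup>2 = E"
      by (simp add: E_def power2_eq_square flip: exp_add)
    then have "x (Suc j) - E * x j
        = - \<beta> * (integral {a..b} (\<lambda>s. exp ((s - b) / \<tau>) * f1 s) - exp (- (b - a) / (2 * \<tau>)) * (f b - f a))"
      using q[of \<beta>] \<open>b - a = dt\<close> \<open>0 < dt\<close>
      by (simp add: x_def a_def b_def E_def algebra_simps)
    moreover have "\<bar>integral {a..b} (\<lambda>s. exp ((s - b) / \<tau>) * f1 s) - exp (- (b - a) / (2 * \<tau>)) * (f b - f a)\<bar>
        \<le> min ((b - a) ^ 3 * (M / (8 * \<tau>\<^sup>2) + M / (4 * \<tau>))) ((b - a) * M)"
      using \<open>{a..b} \<subseteq> {0..T}\<close> \<open>b - a = dt\<close> \<open>0 < dt\<close> \<open>0 < \<tau>\<close> M1 M2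
      by (intro exp_kernel_step_error_le[of a b \<tau> f f1 f2] DERIV_subset[OF f] DERIV_subset[OF f1]) auto
    ultimately show ?thesis
      using \<open>0 \<le> \<beta>\<close> \<open>b - a = dt\<close> by (simp add: \<delta>_def abs_mult mult_left_mono)
  qed
  have "\<bar>x n\<bar> \<le> \<delta> / (1 - E)"
    using \<open>E < 1\<close> \<open>0 \<le> \<delta>\<close> step by (intro abs_linear_recursion_le) (simp_all add: x_def E_def)
  also have "\<dots> \<le> \<delta> * (1 + \<tau> / dt)"
  proof -
    have "1 / (1 - E) \<le> 1 + \<tau> / dt"
      using inverse_one_minus_exp_neg_le[of "dt / \<tau>"] \<open>0 < dt\<close> \<open>0 < \<tau>\<close> by (simp add: E_def)
    from mult_left_mono[OF this \<open>0 \<le> \<delta>\<close>] show ?thesis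
      by simp
  qed
  also have "\<dots> \<le> \<beta> * (2 * (1 / \<tau> + 1) * dt\<^sup>2 * M)"
    unfolding \<delta>_def mult.assoc
    by (intro mult_left_mono accumulated_step_error_le[unfolded mult.assoc]) (use assms \<open>0 \<le> M\<close> in auto)
  finally show ?thesis
    by (simp add: x_def mult_ac)
qed

definition Dhat_error_const :: "nat \<Rightarrow> (nat \<Rightarrow> real) \<Rightarrow> (nat \<Rightarrow> real) \<Rightarrow> real" where
  "Dhat_error_const N \<beta> \<tau> = (\<Sum>k=1..N. 2 * \<beta> k * (1 / \<tau> k + 1))"

lemma sum_qdisc_error_le:
  fixes f f1 f2 :: "real \<Rightarrow> real"
  assumes f: "\<And>x. x \<in> {0..T} \<Longrightarrow> (f has_real_derivative f1 x) (at x within {0..T})"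
    and f1: "\<And>x. x \<in> {0..T} \<Longrightarrow> (f1 has_real_derivative f2 x) (at x within {0..T})"
    and "\<And>x. x \<in> {0..T} \<Longrightarrow> \<bar>f1 x\<bar> \<le> M"
    and "\<And>x. x \<in> {0..T} \<Longrightarrow> \<bar>f2 x\<bar> \<le> M"
    and "\<forall>k\<in>{1..N}. \<tau> k > 0" and "\<forall>k\<in>{1..N}. \<beta> k \<ge> 0" and "0 < dt" and "real n * dt \<le> T"
  shows "\<bar>\<Sum>k=1..N. qdisc (\<beta> k) (\<tau> k) dt f (qexact (\<beta> k) (\<tau> k) f1 0) n - qexact (\<beta> k) (\<tau> k) f1 (real n * dt)\<bar>
           \<le> dt * (Dhat_error_const N \<beta> \<tau> * dt) * M"
proof -
  have "\<bar>\<Sum>k=1..N. qdisc (\<beta> k) (\<tau> k) dt f (qexact (\<beta> k) (\<tau> k) f1 0) n - qexact (\<beta> k) (\<tau> k) f1 (real n * dt)\<bar>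
      \<le> (\<Sum>k=1..N. 2 * \<beta> k * (1 / \<tau> k + 1) * dt\<^sup>2 * M)"
    using assms(3-) by (intro order_trans[OF sum_abs] sum_mono qdisc_error_le[OF f f1]) auto
  also have "\<dots> = dt * (Dhat_error_const N \<beta> \<tau> * dt) * M"
    by (simp add: Dhat_error_const_def sum_distrib_left power2_eq_square mult_ac)
  finally show ?thesis .
qed

definition caputo_kernel_primitive :: "real \<Rightarrow> real \<Rightarrow> real" where
  "caputo_kernel_primitive \<alpha> z = z powr (1 - \<alpha>) / Gamma (2 - \<alpha>)"

definition exp_kernel_primitive :: "nat \<Rightarrow> (nat \<Rightarrow> real) \<Rightarrow> (nat \<Rightarrow> real) \<Rightarrow> real \<Rightarrow> real" where
  "exp_kernel_primitive N \<beta> \<tau> z = \<beta> 0 + (\<Sum>k=1..N. \<beta> k * \<tau> k * (1 - exp (- z / \<tau> k)))"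

lemma eps_eq_kernel_primitive_diff:
  "eps \<alpha> N \<beta> \<tau> z = caputo_kernel_primitive \<alpha> z - exp_kernel_primitive N \<beta> \<tau> z"
proof -
  have "(\<Sum>k=1..N. \<beta> k * \<tau> k * (exp (- z / \<tau> k) - 1))
      = - (\<Sum>k=1..N. \<beta> k * \<tau> k * (1 - exp (- z / \<tau> k)))"
    by (simp add: sum_negf[symmetric] algebra_simps)
  then show ?thesis
    unfolding eps_def caputo_kernel_primitive_def exp_kernel_primitive_def by simp
qed

lemma continuous_on_caputo_kernel_primitive:
  assumes "\<alpha> < 1"
  shows "continuous_on {0..T} (caputo_kernel_primitive \<alpha>)"
proof -
  have "continuous_on {0..T} (\<lambda>z. z powr (1 - \<alpha>))"
    by (rule continuous_on_powr') (use assms in \<open>auto intro: continuous_intros\<close>)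
  moreover have "Gamma (2 - \<alpha>) > 0"
    using assms by (intro Gamma_real_pos) simp
  ultimately show ?thesis
    unfolding caputo_kernel_primitive_def[abs_def] by (intro continuous_on_divide continuous_on_const) auto
qed

lemma continuous_on_exp_kernel_primitive:
  assumes "\<forall>k\<in>{1..N}. \<tau> k > 0"
  shows "continuous_on S (exp_kernel_primitive N \<beta> \<tau>)"
  unfolding exp_kernel_primitive_def[abs_def]
  using assms by (intro continuous_intros) (auto dest: less_imp_neq[symmetric])

lemma has_integral_convolution_by_parts:
  fixes g g' \<Phi> \<phi> :: "real \<Rightarrow> real"
  assumes "0 \<le> t"
    and g: "\<And>x. x \<in> {0..t} \<Longrightarrow> (g has_real_derivative g' x) (at x within {0..t})"
    and "continuous_on {0..t} g'" and "continuous_on {0..t} \<Phi>"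
    and \<Phi>: "\<And>z. z \<in> {0<..<t} \<Longrightarrow> (\<Phi> has_real_derivative \<phi> z) (at z)"
  shows "((\<lambda>s. g s * \<phi> (t - s)) has_integral
           g 0 * \<Phi> t - g t * \<Phi> 0 + integral {0..t} (\<lambda>s. g' s * \<Phi> (t - s))) {0..t}"
proof -
  have "continuous_on {0..t} (\<lambda>s. \<Phi> (t - s))"
    by (rule continuous_on_compose2[OF \<open>continuous_on {0..t} \<Phi>\<close>]) (auto intro!: continuous_intros)
  note cont = this \<open>continuous_on {0..t} g'\<close> DERIV_continuous_on[OF g]
  have "((\<lambda>s. - (g s * \<Phi> (t - s))) has_vector_derivative g s * \<phi> (t - s) - g' s * \<Phi> (t - s)) (at s)"
    if s: "s \<in> {0<..<t}" for s
  proof -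
    have "(g has_real_derivative g' s) (at s)"
      using g[of s] s at_within_interior[of s "{0..t}"] by auto
    moreover have "(\<Phi> has_real_derivative \<phi> (t - s)) (at (t - s))"
      using s by (intro \<Phi>) auto
    ultimately show ?thesis
      unfolding has_real_derivative_iff_has_vector_derivative[symmetric]
      by (auto intro!: derivative_eq_intros DERIV_chain2[where f = \<Phi>] simp: algebra_simps)
  qed
  then have "((\<lambda>s. g s * \<phi> (t - s) - g' s * \<Phi> (t - s)) has_integral
      - (g t * \<Phi> (t - t)) - - (g 0 * \<Phi> (t - 0))) {0..t}"
    using \<open>0 \<le> t\<close> by (intro fundamental_theorem_of_calculus_interior continuous_intros cont) auto
  moreover have "((\<lambda>s. g' s * \<Phi> (t - s)) has_integral integral {0..t} (\<lambda>s. g' s * \<Phi> (t - s))) {0..t}"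
    by (intro integrable_integral integrable_continuous_real continuous_intros cont)
  ultimately have "((\<lambda>s. (g s * \<phi> (t - s) - g' s * \<Phi> (t - s)) + g' s * \<Phi> (t - s)) has_integral
      (- (g t * \<Phi> (t - t)) - - (g 0 * \<Phi> (t - 0))) + integral {0..t} (\<lambda>s. g' s * \<Phi> (t - s))) {0..t}"
    by (rule has_integral_add)
  then show ?thesis
    by (simp add: algebra_simps)
qed

lemma caputo_by_parts:
  fixes g g' :: "real \<Rightarrow> real"
  assumes "0 < \<alpha>" and "\<alpha> < 1" and "0 < t"
    and g: "\<And>x. x \<in> {0..t} \<Longrightarrow> (g has_real_derivative g' x) (at x within {0..t})"
    and "continuous_on {0..t} g'"
  shows "caputo \<alpha> g t = g 0 * caputo_kernel_primitive \<alpha> t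
           + integral {0..t} (\<lambda>s. g' s * caputo_kernel_primitive \<alpha> (t - s))"
proof -
  have "1 - \<alpha> \<notin> \<int>\<^sub>\<le>\<^sub>0"
    using \<open>\<alpha> < 1\<close> by (auto elim!: nonpos_Ints_cases)
  then have "Gamma (2 - \<alpha>) = (1 - \<alpha>) * Gamma (1 - \<alpha>)"
    using Gamma_plus1[of "1 - \<alpha>"] by (simp add: algebra_simps)
  moreover have "Gamma (1 - \<alpha>) > 0"
    using \<open>\<alpha> < 1\<close> by simp
  ultimately have "(caputo_kernel_primitive \<alpha> has_real_derivative 1 / Gamma (1 - \<alpha>) / z powr \<alpha>) (at z)"
    if "z \<in> {0<..<t}" for z
  proof -
    have "((\<lambda>z. z powr (1 - \<alpha>)) has_real_derivative (1 - \<alpha>) * z powr (- \<alpha>)) (at z)"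
      using has_real_derivative_powr[of z "1 - \<alpha>"] that by simp
    then have "(caputo_kernel_primitive \<alpha> has_real_derivative (1 - \<alpha>) * z powr (- \<alpha>) / Gamma (2 - \<alpha>)) (at z)"
      unfolding caputo_kernel_primitive_def[abs_def] by (rule DERIV_cdivide)
    moreover have "(1 - \<alpha>) * z powr (- \<alpha>) / Gamma (2 - \<alpha>) = 1 / Gamma (1 - \<alpha>) / z powr \<alpha>"
      using \<open>\<alpha> < 1\<close> \<open>Gamma (2 - \<alpha>) = (1 - \<alpha>) * Gamma (1 - \<alpha>)\<close> \<open>Gamma (1 - \<alpha>) > 0\<close>
      by (simp add: powr_minus_divide)
    ultimately show ?thesis
      by simp
  qed
  from has_integral_convolution_by_parts[OF _ g \<open>continuous_on {0..t} g'\<close>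
      continuous_on_caputo_kernel_primitive[OF \<open>\<alpha> < 1\<close>] this]
  have "((\<lambda>s. g s * (1 / Gamma (1 - \<alpha>) / (t - s) powr \<alpha>)) has_integral
      g 0 * caputo_kernel_primitive \<alpha> t + integral {0..t} (\<lambda>s. g' s * caputo_kernel_primitive \<alpha> (t - s))) {0..t}"
    using \<open>0 < t\<close> by (simp add: caputo_kernel_primitive_def)
  then show ?thesis
    unfolding caputo_def integral_mult_right[symmetric] by (simp add: integral_unique)
qed

lemma exp_sum_by_parts:
  fixes g g' :: "real \<Rightarrow> real"
  assumes "0 < t" and \<tau>: "\<forall>k\<in>{1..N}. \<tau> k > 0"
    and g: "\<And>x. x \<in> {0..t} \<Longrightarrow> (g has_real_derivative g' x) (at x within {0..t})"
    and "continuous_on {0..t} g'"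
  shows "\<beta> 0 * g t + (\<Sum>k=1..N. qexact (\<beta> k) (\<tau> k) g t)
           = g 0 * exp_kernel_primitive N \<beta> \<tau> t
             + integral {0..t} (\<lambda>s. g' s * exp_kernel_primitive N \<beta> \<tau> (t - s))"
proof -
  define \<phi> where "\<phi> z = (\<Sum>k=1..N. \<beta> k * exp (- z / \<tau> k))" for z
  have "\<tau> k \<noteq> 0" if "1 \<le> k" "k \<le> N" for k
    using \<tau> that by force
  then have "(exp_kernel_primitive N \<beta> \<tau> has_real_derivative \<phi> z) (at z)" for z
    unfolding exp_kernel_primitive_def[abs_def] \<phi>_def
    by (auto intro!: derivative_eq_intros sum.cong simp: field_simps)
  from has_integral_convolution_by_parts[OF _ g \<open>continuous_on {0..t} g'\<close>
      continuous_on_exp_kernel_primitive[OF \<tau>] this]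
  have "integral {0..t} (\<lambda>s. g s * \<phi> (t - s))
      = g 0 * exp_kernel_primitive N \<beta> \<tau> t - g t * \<beta> 0
        + integral {0..t} (\<lambda>s. g' s * exp_kernel_primitive N \<beta> \<tau> (t - s))"
    using \<open>0 < t\<close> by (simp add: integral_unique exp_kernel_primitive_def)
  moreover have "(\<Sum>k=1..N. qexact (\<beta> k) (\<tau> k) g t) = integral {0..t} (\<lambda>s. g s * \<phi> (t - s))"
    unfolding qexact_def \<phi>_def sum_distrib_left
    using \<tau> DERIV_continuous_on[OF g]
    by (subst integral_sum[symmetric])
      (auto intro!: integrable_continuous_real continuous_intros integral_cong sum.cong
        dest: less_imp_neq[symmetric] simp: algebra_simps)
  ultimately show ?thesis
    by simp
qed

lemma abs_convolution_difference_le: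
  fixes g K P :: "real \<Rightarrow> real"
  assumes "0 \<le> t" and g: "continuous_on {0..t} g"
    and K: "continuous_on {0..t} K" and P: "continuous_on {0..t} P"
    and E: "\<And>z. z \<in> {0..t} \<Longrightarrow> \<bar>K z - P z\<bar> \<le> E"
  shows "\<bar>(c * K t + integral {0..t} (\<lambda>s. g s * K (t - s)))
           - (c * P t + integral {0..t} (\<lambda>s. g s * P (t - s)))\<bar>
         \<le> E * (\<bar>c\<bar> + integral {0..t} (\<lambda>s. \<bar>g s\<bar>))"
proof -
  have "continuous_on {0..t} (\<lambda>s. K (t - s))" "continuous_on {0..t} (\<lambda>s. P (t - s))"
    by (auto intro!: continuous_on_compose2[OF K] continuous_on_compose2[OF P] continuous_intros)
  note cont = this g
  have "integral {0..t} (\<lambda>s. g s * K (t - s)) - integral {0..t} (\<lambda>s. g s * P (t - s))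
      = integral {0..t} (\<lambda>s. g s * (K (t - s) - P (t - s)))"
    by (simp add: right_diff_distrib integral_diff integrable_continuous_real continuous_intros cont)
  also have "\<bar>\<dots>\<bar> \<le> integral {0..t} (\<lambda>s. \<bar>g s\<bar> * E)"
  proof -
    have "norm (integral {0..t} (\<lambda>s. g s * (K (t - s) - P (t - s)))) \<le> integral {0..t} (\<lambda>s. \<bar>g s\<bar> * E)"
      using E by (intro integral_norm_bound_integral)
        (auto simp: abs_mult mult_left_mono intro!: integrable_continuous_real continuous_intros cont)
    then show ?thesis
      by simp
  qed
  finally have "\<bar>integral {0..t} (\<lambda>s. g s * K (t - s)) - integral {0..t} (\<lambda>s. g s * P (t - s))\<bar>
      \<le> E * integral {0..t} (\<lambda>s. \<bar>g s\<bar>)"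
    by (simp add: mult.commute)
  moreover have "\<bar>c * K t - c * P t\<bar> \<le> \<bar>c\<bar> * E"
    using E[of t] \<open>0 \<le> t\<close> by (simp add: abs_mult mult_left_mono flip: right_diff_distrib)
  ultimately show ?thesis
    by (simp add: distrib_left mult.commute abs_le_iff)
qed

lemma exp_sum_caputo_error_le:
  fixes g g' :: "real \<Rightarrow> real"
  assumes "0 < \<alpha>" and "\<alpha> < 1" and \<tau>: "\<forall>k\<in>{1..N}. \<tau> k > 0" and "0 < t" and "t \<le> T"
    and g: "\<And>x. x \<in> {0..T} \<Longrightarrow> (g has_real_derivative g' x) (at x within {0..T})"
    and g': "continuous_on {0..T} g'"
  shows "\<bar>\<beta> 0 * g t + (\<Sum>k=1..N. qexact (\<beta> k) (\<tau> k) g t) - caputo \<alpha> g t\<bar>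
           \<le> Linf_norm T (eps \<alpha> N \<beta> \<tau>) * (\<bar>g 0\<bar> + L1_norm T g')"
proof -
  define E where "E = Linf_norm T (eps \<alpha> N \<beta> \<tau>)"
  have "{0..t} \<subseteq> {0..T}"
    using \<open>t \<le> T\<close> by auto
  then have g_t: "\<And>x. x \<in> {0..t} \<Longrightarrow> (g has_real_derivative g' x) (at x within {0..t})"
    and g'_t: "continuous_on {0..t} g'"
    using g DERIV_subset continuous_on_subset[OF g'] by blast+
  have "continuous_on {0..T} (eps \<alpha> N \<beta> \<tau>)"
    unfolding eps_eq_kernel_primitive_diff[abs_def]
    by (intro continuous_intros continuous_on_caputo_kernel_primitive
        continuous_on_exp_kernel_primitive \<tau> \<open>\<alpha> < 1\<close>)
  then have "\<bar>exp_kernel_primitive N \<beta> \<tau> z - caputo_kernel_primitive \<alpha> z\<bar> \<le> E" if "z \<in> {0..t}" for z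
    using abs_le_Linf_norm[of T "eps \<alpha> N \<beta> \<tau>" z] that \<open>{0..t} \<subseteq> {0..T}\<close>
    by (auto simp: E_def eps_eq_kernel_primitive_diff abs_minus_commute)
  note bound = this
  have "\<bar>\<beta> 0 * g t + (\<Sum>k=1..N. qexact (\<beta> k) (\<tau> k) g t) - caputo \<alpha> g t\<bar>
      = \<bar>(g 0 * exp_kernel_primitive N \<beta> \<tau> t
            + integral {0..t} (\<lambda>s. g' s * exp_kernel_primitive N \<beta> \<tau> (t - s)))
         - (g 0 * caputo_kernel_primitive \<alpha> t
            + integral {0..t} (\<lambda>s. g' s * caputo_kernel_primitive \<alpha> (t - s)))\<bar>"
    by (simp only: exp_sum_by_parts[OF \<open>0 < t\<close> \<tau> g_t g'_t]
        caputo_by_parts[OF \<open>0 < \<alpha>\<close> \<open>\<alpha> < 1\<close> \<open>0 < t\<close> g_t g'_t])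
  also have "\<dots> \<le> E * (\<bar>g 0\<bar> + integral {0..t} (\<lambda>s. \<bar>g' s\<bar>))"
    using \<open>0 < t\<close> by (intro abs_convolution_difference_le g'_t continuous_on_exp_kernel_primitive \<tau>
        continuous_on_caputo_kernel_primitive \<open>\<alpha> < 1\<close> bound) auto
  also have "\<dots> \<le> E * (\<bar>g 0\<bar> + L1_norm T g')"
  proof (intro mult_left_mono add_left_mono)
    show "integral {0..t} (\<lambda>s. \<bar>g' s\<bar>) \<le> L1_norm T g'"
      unfolding L1_norm_def using \<open>{0..t} \<subseteq> {0..T}\<close>
      by (intro integral_subset_le integrable_continuous_real continuous_intros g' g'_t) auto
    show "0 \<le> E"
      using abs_le_Linf_norm[OF \<open>continuous_on {0..T} (eps \<alpha> N \<beta> \<tau>)\<close>, of 0] \<open>0 < t\<close> \<open>t \<le> T\<close>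
      by (simp add: E_def)
  qed
  finally show ?thesis
    by (simp add: E_def)
qed

lemma Dhat_error_le:
  fixes f f1 f2 f3 :: "real \<Rightarrow> real"
  assumes "0 < \<alpha>" and "\<alpha> < 1" and \<beta>: "\<forall>k\<in>{0..N}. \<beta> k > 0" and \<tau>: "\<forall>k\<in>{1..N}. \<tau> k > 0"
    and f: "\<And>x. x \<in> {0..T} \<Longrightarrow> (f has_real_derivative f1 x) (at x within {0..T})"
    and f1: "\<And>x. x \<in> {0..T} \<Longrightarrow> (f1 has_real_derivative f2 x) (at x within {0..T})"
    and f2: "continuous_on {0..T} f2"
    and "0 < dt" and "1 \<le> n" and "real n * dt \<le> T"
  shows "\<bar>Dhat N \<beta> \<tau> dt f f1 n - caputo \<alpha> f1 (real n * dt)\<bar>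
           \<le> Linf_norm T (eps \<alpha> N \<beta> \<tau>) * (\<bar>f1 0\<bar> + L1_norm T f2)
             + dt * (\<beta> 0 / 2 + Dhat_error_const N \<beta> \<tau> * dt) * W3inf_norm T f f1 f2 f3"
proof -
  define t a W where "t = real n * dt" and "a = real (n - 1) * dt" and "W = W3inf_norm T f f1 f2 f3"
  have "a = t - dt" "0 \<le> a" "0 < t" "t \<le> T"
    using \<open>1 \<le> n\<close> \<open>0 < dt\<close> \<open>real n * dt \<le> T\<close> by (simp_all add: t_def a_def of_nat_diff algebra_simps)
  have W1: "\<bar>f1 x\<bar> \<le> W" and W2: "\<bar>f2 x\<bar> \<le> W" if "x \<in> {0..T}" for x
    using abs_le_Linf_norm[OF DERIV_continuous_on[OF f1] that] abs_le_Linf_norm[OF f2 that]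
    by (auto simp: W_def W3inf_norm_def)
  have "{a..t} \<subseteq> {0..T}"
    using \<open>0 \<le> a\<close> \<open>t \<le> T\<close> by auto
  then have "\<bar>(f t - f a) / (t - a) - f1 t\<bar> \<le> W * (t - a) / 2"
    using \<open>a = t - dt\<close> \<open>0 < dt\<close> W2
    by (intro backward_difference_quotient_error_le[of a t f f1 f2] DERIV_subset[OF f] DERIV_subset[OF f1]) auto
  moreover have "0 < \<beta> 0"
    using \<beta> by simp
  ultimately have "\<beta> 0 * \<bar>(f t - f a) / dt - f1 t\<bar> \<le> \<beta> 0 * (W * dt / 2)"
    using \<open>a = t - dt\<close> by (intro mult_left_mono) auto
  moreover have "\<beta> 0 / dt * (f t - f a) - \<beta> 0 * f1 t = \<beta> 0 * ((f t - f a) / dt - f1 t)"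
    by (simp add: algebra_simps diff_divide_distrib)
  ultimately have backward: "\<bar>\<beta> 0 / dt * (f t - f a) - \<beta> 0 * f1 t\<bar> \<le> dt * (\<beta> 0 / 2) * W"
    using \<open>0 < \<beta> 0\<close> by (simp add: abs_mult mult_ac)
  have exp_sum: "\<bar>\<Sum>k=1..N. qdisc (\<beta> k) (\<tau> k) dt f (qexact (\<beta> k) (\<tau> k) f1 0) n - qexact (\<beta> k) (\<tau> k) f1 t\<bar>
      \<le> dt * (Dhat_error_const N \<beta> \<tau> * dt) * W"
    unfolding t_def using \<beta> \<tau> W1 W2 \<open>0 < dt\<close> \<open>real n * dt \<le> T\<close>
    by (intro sum_qdisc_error_le[OF f f1]) (auto simp: less_imp_le)
  have caputo: "\<bar>\<beta> 0 * f1 t + (\<Sum>k=1..N. qexact (\<beta> k) (\<tau> k) f1 t) - caputo \<alpha> f1 t\<bar>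
      \<le> Linf_norm T (eps \<alpha> N \<beta> \<tau>) * (\<bar>f1 0\<bar> + L1_norm T f2)"
    by (rule exp_sum_caputo_error_le[OF \<open>0 < \<alpha>\<close> \<open>\<alpha> < 1\<close> \<tau> \<open>0 < t\<close> \<open>t \<le> T\<close> f1 f2])
  have "Dhat N \<beta> \<tau> dt f f1 n - caputo \<alpha> f1 t
      = (\<beta> 0 / dt * (f t - f a) - \<beta> 0 * f1 t)
        + (\<Sum>k=1..N. qdisc (\<beta> k) (\<tau> k) dt f (qexact (\<beta> k) (\<tau> k) f1 0) n - qexact (\<beta> k) (\<tau> k) f1 t)
        + (\<beta> 0 * f1 t + (\<Sum>k=1..N. qexact (\<beta> k) (\<tau> k) f1 t) - caputo \<alpha> f1 t)"
    by (simp add: Dhat_def t_def a_def sum_subtractf)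
  then show ?thesis
    using backward exp_sum caputo
    unfolding t_def W_def distrib_left distrib_right abs_le_iff by linarith
qed

theorem theorem1:
  fixes \<alpha> :: real and N :: nat and \<beta> \<tau> :: "nat \<Rightarrow> real"
  assumes "0 < \<alpha>" and "\<alpha> < 1" and "N \<ge> 1"
    and "\<forall>k\<in>{0..N}. \<beta> k > 0"
    and "\<forall>k\<in>{1..N}. \<tau> k > 0"
  shows "\<exists>C>0. \<forall>(T::real) (f::real\<Rightarrow>real) f1 f2 f3 (NT::nat) (n::nat).
     (T > 0
      \<and> (\<forall>x\<in>{0..T}. (f has_real_derivative f1 x) (at x within {0..T}))
      \<and> (\<forall>x\<in>{0..T}. (f1 has_real_derivative f2 x) (at x within {0..T}))
      \<and> f3 integrable_on {0..T}
      \<and> bdd_above ((\<lambda>s. \<bar>f3 s\<bar>) ` {0..T})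
      \<and> (\<forall>x\<in>{0..T}. f2 x = f2 0 + integral {0..x} f3)
      \<and> NT \<ge> 1 \<and> n \<in> {1..NT})
     \<longrightarrow>
     (let dt = T / real NT in
      \<bar>Dhat N \<beta> \<tau> dt f f1 n - caputo \<alpha> f1 (real n * dt)\<bar>
        \<le> Linf_norm T (eps \<alpha> N \<beta> \<tau>) * (\<bar>f1 0\<bar> + L1_norm T f2)
          + dt * (\<beta> 0 / 2 + C * dt) * W3inf_norm T f f1 f2 f3)"
proof -
  define C where "C = Dhat_error_const N \<beta> \<tau>"
  have "0 < 2 * \<beta> k * (1 / \<tau> k + 1)" if "k \<in> {1..N}" for k
    by (intro mult_pos_pos add_pos_pos) (use assms(4,5) that in auto)
  then have "0 < C"
    unfolding C_def Dhat_error_const_def using \<open>N \<ge> 1\<close> by (intro sum_pos) auto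
  show ?thesis
  proof (intro exI[of _ C] conjI allI impI, goal_cases)
    case 1
    show ?case by fact
  next
    case (2 T f f1 f2 f3 NT n)
    then have "0 < T" "1 \<le> NT" "1 \<le> n" "n \<le> NT"
      by simp_all
    from 2 have "continuous_on {0..T} (\<lambda>x. f2 0 + integral {0..x} f3)"
      by (intro continuous_intros indefinite_integral_continuous_1) blast
    then have f2: "continuous_on {0..T} f2"
      using 2 by (metis (no_types, lifting) continuous_on_cong)
    show ?case
      unfolding Let_def C_def
    proof (rule Dhat_error_le[OF assms(1,2,4,5) _ _ f2])
      show "(f has_real_derivative f1 x) (at x within {0..T})"
        and "(f1 has_real_derivative f2 x) (at x within {0..T})" if "x \<in> {0..T}" for x
        using 2 that by blast+
      show "0 < T / real NT" "real n * (T / real NT) \<le> T"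
        using \<open>0 < T\<close> \<open>1 \<le> NT\<close> \<open>n \<le> NT\<close> by (simp_all add: field_simps mult_right_mono)
    qed fact
  qed
qed

end
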